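(* Let $x_0>0$ and $v_0>0$. For each $\alpha\in[-\pi,\pi]$, consider the closed curve $$E_\alpha:\quad x = x_0 \cos t + v_0 \cos \alpha \,\sin t,\qquad y = v_0 \sin \alpha\, \sin t,\qquad 0 \le t \le 2\pi,$$ which is the trajectory of the planar free harmonic oscillator $x''+x=0,\ y''+y=0$ with initial position $(x_0,0)$ and initial velocity $(v_0\cos\alpha, v_0\sin\alpha)$. It is an ellipse centered at the origin, or a segment when $\sin\alpha=0$. Then, as $\alpha$ ranges over $[-\pi,\pi]$, the foci of the curves $E_\alpha$ trace the Cassini oval with Cartesian equation $$[(x + x_0)^2 + y^2]\,[(x - x_0)^2 + y^2] = v_0^4,$$ equivalently $$(x^2 + y^2)^2 - 2x_0^2(x^2 - y^2) = v_0^4 - x_0^4,$$ and polar equation $$r^4 - 2x_0^2 r^2 \cos 2\theta = v_0^4 - x_0^4 .$$ This Cassini oval lies symmetrically inside the ellipse of safety $$\frac{x^2}{x_0^2+v_0^2}+\frac{y^2}{v_0^2}=1 .$$ In particular, when $x_0 = v_0$ the locus of the foci is Bernoulli's lemniscate, with Cartesian equation $$(x^2 + y^2)^2 = 2x_0^2(x^2 - y^2)$$ and polar equation $$r^2 = 2x_0^2 \cos 2\theta,\qquad -\tfrac{\pi}{4}\le\theta\le\tfrac{\pi}{4}.$$ Moreover, in this case $\alpha = 2\theta$, where $\theta$ is the polar angle of the focus, so the lemniscate is given by $$r^2 = 2x_0^2\cos\alpha,\qquad -\tfrac{\pi}{2}\le\alpha\le\tfrac{\pi}{2}.$$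
   Context: The ellipse of safety is the envelope of the family of curves $E_\alpha$: its complement's exterior is the set of points not reached by any trajectory. When $\sin\alpha=0$ the curve $E_\alpha$ degenerates to the segment from $(-\sqrt{x_0^2+v_0^2},0)$ to $(\sqrt{x_0^2+v_0^2},0)$, and its foci are taken to be the endpoints of that segment. A Cassini oval with foci $(\pm\lambda,0)$ is the set of points whose distances to these two foci have constant product $\mu^2$. Polar coordinates are $x=r\cos\theta$, $y=r\sin\theta$. *)

theory Defs
  imports "HOL-Analysis.Analysis"
begin

text \<open>The trajectory E_alpha of the planar free harmonic oscillator, as a point set in the plane
  (points are pairs (x,y); dist on real \<times> real is the Euclidean distance).\<close>
definition E_curve :: "real \<Rightarrow> real \<Rightarrow> real \<Rightarrow> (real \<times> real) set" where
  "E_curve x0 v0 \<alpha> =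
     {(x0 * cos t + v0 * cos \<alpha> * sin t, v0 * sin \<alpha> * sin t) | t. 0 \<le> t \<and> t \<le> 2 * pi}"

text \<open>For a segment this makes the foci its endpoints,
  matching the convention of the paper; for a circle both foci are the centre.\<close>
definition foci_of :: "(real \<times> real) set \<Rightarrow> real \<times> real \<Rightarrow> real \<times> real \<Rightarrow> bool" where
  "foci_of S F1 F2 \<longleftrightarrow> (\<exists>a. S = {P. dist P F1 + dist P F2 = a})"

definition focus_locus :: "real \<Rightarrow> real \<Rightarrow> (real \<times> real) set" where
  "focus_locus x0 v0 =
     {F. \<exists>\<alpha>. -pi \<le> \<alpha> \<and> \<alpha> \<le> pi \<and> (\<exists>F'. foci_of (E_curve x0 v0 \<alpha>) F F')}"

end

theory Submission
  imports Defs
begin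

text \<open>The orbit \<open>E\<^sub>\<alpha>\<close> is the ellipse with conjugate semi-diameters \<open>p = (x\<^sub>0, 0)\<close> and
  \<open>q = v\<^sub>0 (cos \<alpha>, sin \<alpha>)\<close>. Reading points as complex numbers, its foci are \<open>\<plusminus>f\<close> with
  \<open>f\<^sup>2 = p\<^sup>2 + q\<^sup>2\<close>, that is \<open>f\<^sup>2 - x\<^sub>0\<^sup>2 = v\<^sub>0\<^sup>2 exp (2 i \<alpha>)\<close>; when \<open>E\<^sub>\<alpha>\<close> is a segment its ends satisfy
  the same relation. As \<open>\<alpha>\<close> runs through \<open>[-\<pi>, \<pi>]\<close> the right-hand side covers the circle of radius
  \<open>v\<^sub>0\<^sup>2\<close>, so the foci are exactly the points with \<open>|f - x\<^sub>0| |f + x\<^sub>0| = v\<^sub>0\<^sup>2\<close>: the Cassini oval. The focal-sum condition of an ellipse with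
  foci \<open>m \<plusminus> h\<close> is a quadric; imposing it at five points of the orbit forces \<open>m = 0\<close> and the relation
  for \<open>f = h\<close>, and conversely the implicit equation of the orbit is such a quadric.\<close>

text \<open>The method \<open>algebra\<close> does not use a hypothesis \<open>p = q\<close> one side of which is a variable;
  in the form \<open>p - q = 0\<close> it does.\<close>
lemmas diff_eq_0I = right_minus_eq[THEN iffD2]

lemma dist_pair_sqrt: "dist (a, b) (c, d) = sqrt ((a - c)^2 + (b - d)^2)" for a b c d :: real
  by (simp add: dist_Pair_Pair dist_real_def)

lemma foci_of_commute: "foci_of S F G \<Longrightarrow> foci_of S G F"
  unfolding foci_of_def by (simp add: add.commute)

lemma focal_set_const_pos:
  fixes F G :: "'a::metric_space"
  assumes "S = {P. dist P F + dist P G = a}" "P \<in> S" "Q \<in> S" "P \<noteq> Q"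
  shows "a > 0"
proof (rule ccontr)
  assume "\<not> a > 0"
  with assms(1) have "X = F" if "X \<in> S" for X
    using that by (smt (verit) mem_Collect_eq zero_le_dist dist_eq_0_iff)
  with assms(2-4) show False by blast
qed

section \<open>Foci of the orbits\<close>

definition osc_orbit :: "real \<Rightarrow> real \<Rightarrow> real \<Rightarrow> (real \<times> real) set" where
  "osc_orbit c u w = {(c * cos t + u * sin t, w * sin t) | t. 0 \<le> t \<and> t \<le> 2 * pi}"

lemma E_curve_eq_osc_orbit: "E_curve x0 v0 \<alpha> = osc_orbit x0 (v0 * cos \<alpha>) (v0 * sin \<alpha>)"
  unfolding E_curve_def osc_orbit_def by (simp add: mult.assoc)

lemma osc_orbitI: "0 \<le> t \<Longrightarrow> t \<le> 2 * pi \<Longrightarrow> (c * cos t + u * sin t, w * sin t) \<in> osc_orbit c u w"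
  unfolding osc_orbit_def by blast

lemma osc_orbit_points:
  "(c, 0) \<in> osc_orbit c u w" "(-c, 0) \<in> osc_orbit c u w"
  "(u, w) \<in> osc_orbit c u w" "(-u, -w) \<in> osc_orbit c u w"
  "((c + u) * (sqrt 2 / 2), w * (sqrt 2 / 2)) \<in> osc_orbit c u w"
proof -
  show "(c, 0) \<in> osc_orbit c u w" using osc_orbitI[of 0 c u w] by simp
  show "(-c, 0) \<in> osc_orbit c u w" using osc_orbitI[of pi c u w] by simp
  show "(u, w) \<in> osc_orbit c u w" using osc_orbitI[of "pi/2" c u w] by simp
  have "(c * cos (3/2*pi) + u * sin (3/2*pi), w * sin (3/2*pi)) \<in> osc_orbit c u w"
    by (rule osc_orbitI) simp_all
  then show "(-u, -w) \<in> osc_orbit c u w" by (simp only: cos_3over2_pi sin_3over2_pi) simp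
  show "((c + u) * (sqrt 2 / 2), w * (sqrt 2 / 2)) \<in> osc_orbit c u w"
    using osc_orbitI[of "pi/4" c u w] by (simp only: cos_45 sin_45) (simp add: distrib_right add_divide_distrib)
qed

text \<open>Squaring twice turns the focal-sum condition for the foci \<open>\<plusminus>h\<close> into a quadric in \<open>q\<close>.\<close>
lemma focal_sum_conic:
  fixes q1 q2 h1 h2 a :: real
  assumes "sqrt ((q1 - h1)^2 + (q2 - h2)^2) + sqrt ((q1 + h1)^2 + (q2 + h2)^2) = a" "a > 0"
  shows "a^2 * ((q1^2 + q2^2) + (h1^2 + h2^2)) = a^4/4 + 4 * (q1 * h1 + q2 * h2)^2"
proof -
  define d1 where "d1 = sqrt ((q1 - h1)^2 + (q2 - h2)^2)"
  define d2 where "d2 = sqrt ((q1 + h1)^2 + (q2 + h2)^2)"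
  have s1: "d1^2 = (q1 - h1)^2 + (q2 - h2)^2" and s2: "d2^2 = (q1 + h1)^2 + (q2 + h2)^2"
    unfolding d1_def d2_def by simp_all
  have sum: "d1 + d2 = a" using assms(1) unfolding d1_def d2_def .
  have "(d1 - d2) * a = d1^2 - d2^2" by (simp add: sum[symmetric] power2_eq_square algebra_simps)
  also have "\<dots> = -4 * (q1 * h1 + q2 * h2)" using s1 s2 by (simp add: power2_eq_square algebra_simps)
  finally have dif: "(d1 - d2) * a = -4 * (q1 * h1 + q2 * h2)" .
  have "2 * d1 * a = (d1 + d2) * a + (d1 - d2) * a" by algebra
  also have "\<dots> = a^2 - 4 * (q1 * h1 + q2 * h2)" using sum dif by (simp add: power2_eq_square)
  finally have "2 * d1 * a = a^2 - 4 * (q1 * h1 + q2 * h2)" .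
  then have "(2 * d1 * a)^2 = (a^2 - 4 * (q1 * h1 + q2 * h2))^2" by simp
  then have "4 * d1^2 * a^2 = (a^2 - 4 * (q1 * h1 + q2 * h2))^2" by (simp add: power_mult_distrib)
  then have "4 * ((q1 - h1)^2 + (q2 - h2)^2) * a^2 = (a^2 - 4 * (q1 * h1 + q2 * h2))^2"
    using s1 by simp
  then show ?thesis by algebra
qed

lemma focal_conic_centre:
  fixes c u w a m1 m2 h1 h2 :: real
  assumes c: "c > 0" and w: "w \<noteq> 0" and a: "a > 0"
    and conic: "\<And>x y. (x, y) \<in> {(c, 0), (-c, 0), (u, w), (-u, -w)} \<Longrightarrow>
      a^2 * ((x - m1)^2 + (y - m2)^2 + (h1^2 + h2^2)) = a^4/4 + 4 * ((x - m1) * h1 + (y - m2) * h2)^2"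
  shows "m1 = 0 \<and> m2 = 0"
proof -
  text \<open>The equations at \<open>P\<close> and \<open>-P\<close> differ by a multiple of \<open>P \<bullet> (a\<^sup>2 m - 4 (m \<bullet> h) h)\<close>.\<close>
  define M where "M = m1 * h1 + m2 * h2"
  note e1 = conic[of c 0] and e2 = conic[of "-c" 0] and e3 = conic[of u w] and e4 = conic[of "-u" "-w"]
  have "c * (a^2 * m1 - 4 * M * h1) = 0" using e1 e2 unfolding M_def by simp algebra
  then have l1: "a^2 * m1 = 4 * M * h1" using c by simp
  have "w * (a^2 * m2 - 4 * M * h2) = 0" using e3 e4 l1 unfolding M_def by simp algebra
  then have l2: "a^2 * m2 = 4 * M * h2" using w by simp
  have "M * (a^2 - 4 * (h1^2 + h2^2)) = 0" using l1 l2 unfolding M_def by algebra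
  then consider "M = 0" | "a^2 = 4 * (h1^2 + h2^2)" by force
  then show ?thesis
  proof cases
    case 1
    then show ?thesis using l1 l2 a by simp
  next
    case 2
    have "(c * h2)^2 = 0" using e1 l1 l2 2 unfolding M_def by simp algebra
    then have "h2 = 0" using c by simp
    moreover have "(u * h2 - w * h1)^2 = 0" using e3 l1 l2 2 unfolding M_def by simp algebra
    ultimately show ?thesis using 2 w a by simp
  qed
qed

lemma centred_focal_conic_foci:
  fixes c u w a f1 f2 :: real
  assumes c: "c > 0" and w: "w \<noteq> 0" and a: "a > 0"
    and conic: "\<And>x y. (x, y) \<in> {(c, 0), (u, w), ((c + u) * (sqrt 2 / 2), w * (sqrt 2 / 2))} \<Longrightarrow>
      a^2 * (x^2 + y^2 + (f1^2 + f2^2)) = a^4/4 + 4 * (x * f1 + y * f2)^2"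
  shows "f1^2 - f2^2 = c^2 + u^2 - w^2 \<and> f1 * f2 = u * w"
proof -
  define s where "s = a^2/4"
  define B11 B12 B22 where "B11 = s - f1^2" and "B12 = - f1 * f2" and "B22 = s - f2^2"
  define T where "T = B11 * B22 - B12^2"
  have a2: "a^2 = 4 * s" unfolding s_def by simp
  have form: "x^2 * B11 + 2 * x * y * B12 + y^2 * B22 = T"
    if "(x, y) \<in> {(c, 0), (u, w), ((c + u) * (sqrt 2 / 2), w * (sqrt 2 / 2))}" for x y
    using conic[OF that] a2 unfolding T_def B11_def B12_def B22_def by algebra
  text \<open>\<open>B\<close> is the form \<open>s I - f f\<^sup>T\<close>, with determinant \<open>T\<close>. At \<open>p = (c, 0)\<close>, \<open>q = (u, w)\<close> and
    \<open>(p + q) / \<surd>2\<close> the conic says \<open>B(p, p) = B(q, q) = T\<close> and \<open>B(p, q) = 0\<close>, which determines \<open>B\<close>.\<close>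
  define k :: real where "k = sqrt 2 / 2"
  have k2: "k^2 = 1/2" unfolding k_def by (simp add: power_divide)
  have Bpp: "c^2 * B11 = T" using form[of c 0] by simp
  have Bqq: "u^2 * B11 + 2 * u * w * B12 + w^2 * B22 = T" using form[of u w] by simp
  have "((c + u) * k)^2 * B11 + 2 * ((c + u) * k) * (w * k) * B12 + (w * k)^2 * B22 = T"
    by (rule form) (simp add: k_def)
  then have "k^2 * ((c + u)^2 * B11 + 2 * (c + u) * w * B12 + w^2 * B22) = T"
    by (simp add: power2_eq_square algebra_simps)
  then have Bsum: "(c + u)^2 * B11 + 2 * (c + u) * w * B12 + w^2 * B22 = 2 * T"
    unfolding k2 by simp
  have "c * (u * B11 + w * B12) = 0"
    using Bpp[THEN diff_eq_0I] Bqq[THEN diff_eq_0I] Bsum[THEN diff_eq_0I] by algebra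
  then have Bpq: "u * B11 + w * B12 = 0" using c by simp
  have j1: "c^2 * w^2 * B11 = T * w^2" using Bpp[THEN diff_eq_0I] by algebra
  have j2: "c^2 * w^2 * B12 = - u * T * w" using Bpp[THEN diff_eq_0I] Bpq by algebra
  have j3: "c^2 * w^2 * B22 = T * (c^2 + u^2)" using Bpp[THEN diff_eq_0I] Bpq Bqq[THEN diff_eq_0I] by algebra
  have "T \<noteq> 0"
  proof
    assume "T = 0"
    then have "f1^2 = s" "f2^2 = s" "f1 * f2 = 0"
      using j1 j2 j3 c w unfolding B11_def B12_def B22_def by simp_all
    then show False using a a2 by (smt (verit) mult_eq_0_iff power2_eq_square zero_less_power)
  qed
  moreover have "T * (T - c^2 * w^2) * (c^2 * w^2) = 0"
    using j1[THEN diff_eq_0I] j2[THEN diff_eq_0I] j3[THEN diff_eq_0I] unfolding T_def by algebra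
  ultimately have T: "T = c^2 * w^2" using c w by simp
  have "B11 = w^2" using j1 T c w by simp
  moreover have "c^2 * w^2 * (B12 + u * w) = 0" using j2 T by (simp add: algebra_simps)
  then have "B12 = - u * w" using c w by simp
  moreover have "B22 = c^2 + u^2" using j3 T c w by simp
  ultimately show ?thesis unfolding B11_def B12_def B22_def by simp
qed

lemma osc_orbit_foci_nondegenerate:
  assumes c: "c > 0" and w: "w \<noteq> 0" and foci: "foci_of (osc_orbit c u w) (f1, f2) (g1, g2)"
  shows "f1^2 - f2^2 = c^2 + u^2 - w^2 \<and> f1 * f2 = u * w"
proof -
  obtain a where S: "osc_orbit c u w = {P. dist P (f1, f2) + dist P (g1, g2) = a}"
    using foci unfolding foci_of_def by blast
  have a: "a > 0" using focal_set_const_pos[OF S osc_orbit_points(1,2)] c by simp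
  define m1 m2 h1 h2 where
    "m1 = (f1 + g1) / 2" and "m2 = (f2 + g2) / 2" and "h1 = (f1 - g1) / 2" and "h2 = (f2 - g2) / 2"
  have conic:
    "a^2 * ((x - m1)^2 + (y - m2)^2 + (h1^2 + h2^2)) = a^4/4 + 4 * ((x - m1) * h1 + (y - m2) * h2)^2"
    if "(x, y) \<in> osc_orbit c u w" for x y
  proof (rule focal_sum_conic[OF _ a])
    have shifts:
      "x - m1 - h1 = x - f1" "y - m2 - h2 = y - f2" "x - m1 + h1 = x - g1" "y - m2 + h2 = y - g2"
      by (simp_all add: m1_def m2_def h1_def h2_def field_simps)
    show "sqrt ((x - m1 - h1)^2 + (y - m2 - h2)^2) + sqrt ((x - m1 + h1)^2 + (y - m2 + h2)^2) = a"
      unfolding shifts using that S by (simp add: dist_pair_sqrt)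
  qed
  have centre: "m1 = 0 \<and> m2 = 0"
    by (rule focal_conic_centre[OF c w a]) (auto intro: conic osc_orbit_points)
  then have "h1 = f1" "h2 = f2" by (simp_all add: m1_def m2_def h1_def h2_def field_simps)
  show ?thesis
  proof (rule centred_focal_conic_foci[OF c w a])
    fix x y assume "(x, y) \<in> {(c, 0), (u, w), ((c + u) * (sqrt 2 / 2), w * (sqrt 2 / 2))}"
    then have "(x, y) \<in> osc_orbit c u w" using osc_orbit_points by blast
    from conic[OF this] centre \<open>h1 = f1\<close> \<open>h2 = f2\<close>
    show "a^2 * (x^2 + y^2 + (f1^2 + f2^2)) = a^4/4 + 4 * (x * f1 + y * f2)^2" by simp
  qed
qed

lemma harmonic_range:
  fixes c u x :: real
  assumes "c^2 + u^2 > 0"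
  shows "(\<exists>t. 0 \<le> t \<and> t \<le> 2 * pi \<and> x = c * cos t + u * sin t) \<longleftrightarrow> \<bar>x\<bar> \<le> sqrt (c^2 + u^2)"
proof
  assume "\<exists>t. 0 \<le> t \<and> t \<le> 2 * pi \<and> x = c * cos t + u * sin t"
  then obtain t where x: "x = c * cos t + u * sin t" by blast
  have "(c^2 + u^2) * ((sin t)^2 + (cos t)^2) - x^2 = (c * sin t - u * cos t)^2"
    unfolding x by algebra
  then have "c^2 + u^2 - x^2 = (c * sin t - u * cos t)^2" by simp
  then have "x^2 \<le> c^2 + u^2" by (metis diff_ge_0_iff_ge zero_le_power2)
  then show "\<bar>x\<bar> \<le> sqrt (c^2 + u^2)" by (metis real_sqrt_abs real_sqrt_le_mono)
next
  assume x: "\<bar>x\<bar> \<le> sqrt (c^2 + u^2)"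
  define R where "R = sqrt (c^2 + u^2)"
  have R2: "R^2 = c^2 + u^2" and R: "R > 0" unfolding R_def using assms by simp_all
  have "x^2 \<le> R^2" using x R unfolding R_def[symmetric] by (metis abs_le_square_iff abs_of_pos)
  define y where "y = sqrt (R^2 - x^2)"
  have y2: "y^2 = R^2 - x^2" unfolding y_def using \<open>x^2 \<le> R^2\<close> by simp
  text \<open>Rotate \<open>(x, y)\<close> by the angle of \<open>(c, -u)\<close> and normalise.\<close>
  define C S where "C = (c * x - u * y) / R^2" and "S = (u * x + c * y) / R^2"
  have "(c * x - u * y)^2 + (u * x + c * y)^2 = (c^2 + u^2) * (x^2 + y^2)" by algebra
  then have "C^2 + S^2 = ((c^2 + u^2) * (x^2 + y^2)) / (R^2)^2"
    unfolding C_def S_def by (simp only: power_divide add_divide_distrib[symmetric])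
  also have "\<dots> = R^2 * R^2 / (R^2)^2" using R2 y2 by simp
  also have "\<dots> = 1" using R by (simp add: power2_eq_square)
  finally obtain t where t: "0 \<le> t" "t \<le> 2 * pi" "C = cos t" "S = sin t"
    using sincos_total_2pi_le by blast
  have "c * (c * x - u * y) + u * (u * x + c * y) = (c^2 + u^2) * x" by algebra
  then have "c * C + u * S = (c^2 + u^2) * x / R^2"
    unfolding C_def S_def by (simp only: times_divide_eq_right add_divide_distrib[symmetric])
  also have "\<dots> = x" using R2 R by (simp flip: R2)
  finally show "\<exists>t. 0 \<le> t \<and> t \<le> 2 * pi \<and> x = c * cos t + u * sin t" using t by metis
qed

lemma osc_orbit_flat:
  assumes "c^2 + u^2 > 0"
  shows "osc_orbit c u 0 = {(x, 0) | x. \<bar>x\<bar> \<le> sqrt (c^2 + u^2)}"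
  using harmonic_range[OF assms] unfolding osc_orbit_def by auto

lemma dist_sum_ends_ge_twice_dist_mid:
  fixes R f1 f2 :: real
  assumes R: "R > 0"
  shows "2 * sqrt (f1^2 + f2^2) \<le> sqrt ((R - f1)^2 + f2^2) + sqrt ((R + f1)^2 + f2^2)"
    and "sqrt ((R - f1)^2 + f2^2) + sqrt ((R + f1)^2 + f2^2) = 2 * sqrt (f1^2 + f2^2) \<Longrightarrow>
      f2 = 0 \<and> R \<le> \<bar>f1\<bar>"
proof -
  define K A B where "K = f1^2 + f2^2" and "A = (R - f1)^2 + f2^2" and "B = (R + f1)^2 + f2^2"
  have nonneg: "A \<ge> 0" "B \<ge> 0" "K \<ge> 0" unfolding A_def B_def K_def by simp_all
  have AB: "A * B - (K - R^2)^2 = 4 * R^2 * f2^2" and sum: "A + B = 2 * K + 2 * R^2"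
    unfolding A_def B_def K_def by algebra+
  have sq: "(sqrt A + sqrt B)^2 = A + B + 2 * sqrt (A * B)"
    using nonneg by (simp add: power2_eq_square algebra_simps real_sqrt_mult)
  have sK: "(2 * sqrt K)^2 = 4 * K" using nonneg by (simp add: power_mult_distrib)
  have "sqrt ((K - R^2)^2) \<le> sqrt (A * B)"
    using AB by (intro real_sqrt_le_mono) (smt (verit) zero_le_power2 mult_nonneg_nonneg)
  then have "K - R^2 \<le> sqrt (A * B)" by simp
  then have "(2 * sqrt K)^2 \<le> (sqrt A + sqrt B)^2" using sq sK sum by linarith
  then show "2 * sqrt (f1^2 + f2^2) \<le> sqrt ((R - f1)^2 + f2^2) + sqrt ((R + f1)^2 + f2^2)"
    unfolding A_def B_def K_def by (rule power2_le_imp_le) simp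
  assume "sqrt ((R - f1)^2 + f2^2) + sqrt ((R + f1)^2 + f2^2) = 2 * sqrt (f1^2 + f2^2)"
  then have "(sqrt A + sqrt B)^2 = (2 * sqrt K)^2" unfolding A_def B_def K_def by simp
  then have eq: "sqrt (A * B) = K - R^2" using sq sK sum by linarith
  moreover have "0 \<le> sqrt (A * B)" using nonneg by simp
  ultimately have KR: "K - R^2 \<ge> 0" by simp
  have "A * B = (K - R^2)^2" using eq nonneg by (metis mult_nonneg_nonneg real_sqrt_pow2)
  then have "f2 = 0" using AB R by simp
  moreover from KR this have "R^2 \<le> f1^2" unfolding K_def by simp
  ultimately show "f2 = 0 \<and> R \<le> \<bar>f1\<bar>" using R by (metis abs_le_square_iff abs_of_pos)
qed

lemma flat_segment_focal_set_imp_end: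
  fixes R f1 f2 g1 g2 a :: real
  assumes R: "R > 0" and S: "{(x, 0) | x. \<bar>x\<bar> \<le> R} = {P. dist P (f1, f2) + dist P (g1, g2) = a}"
  shows "f2 = 0 \<and> \<bar>f1\<bar> = R"
proof -
  have on_S: "sqrt ((x - f1)^2 + f2^2) + sqrt ((x - g1)^2 + g2^2) = a" if "\<bar>x\<bar> \<le> R" for x
  proof -
    have "(x, 0) \<in> {P. dist P (f1, f2) + dist P (g1, g2) = a}" using S that by blast
    then show ?thesis by (simp add: dist_pair_sqrt)
  qed
  have O: "sqrt (f1^2 + f2^2) + sqrt (g1^2 + g2^2) = a" using on_S[of 0] R by simp
  have P: "sqrt ((R - f1)^2 + f2^2) + sqrt ((R - g1)^2 + g2^2) = a" using on_S[of R] R by simp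
  have "(-R - f1)^2 = (R + f1)^2" "(-R - g1)^2 = (R + g1)^2" by algebra+
  then have M: "sqrt ((R + f1)^2 + f2^2) + sqrt ((R + g1)^2 + g2^2) = a"
    using on_S[of "-R"] R by simp
  text \<open>The focal sums at the two ends average to the focal sum at the midpoint, so the midpoint
    inequality is an equality for both foci.\<close>
  note ineq = dist_sum_ends_ge_twice_dist_mid[OF R]
  have F: "f2 = 0 \<and> R \<le> \<bar>f1\<bar>" and G: "g2 = 0 \<and> R \<le> \<bar>g1\<bar>"
    using ineq(1)[of f1 f2] ineq(1)[of g1 g2] O P M by (intro ineq(2); linarith)+
  have sums:
    "\<bar>f1\<bar> + \<bar>g1\<bar> = a" "\<bar>R - f1\<bar> + \<bar>R - g1\<bar> = a" "\<bar>R + f1\<bar> + \<bar>R + g1\<bar> = a"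
    using O P M F G by simp_all
  have "f1 \<ge> R \<or> f1 \<le> -R" "g1 \<ge> R \<or> g1 \<le> -R" using F G by linarith+
  then have "\<bar>f1 - g1\<bar> = a" using sums R by (elim disjE) (auto simp: abs_of_nonneg abs_of_nonpos)
  then have "(f1, 0) \<in> {P. dist P (f1, f2) + dist P (g1, g2) = a}"
    using F G by (simp add: dist_pair_sqrt)
  then have "\<bar>f1\<bar> \<le> R" using S by blast
  then show ?thesis using F by simp
qed

lemma foci_of_flat_segment:
  assumes R: "R > 0"
  shows "foci_of {(x, 0) | x. \<bar>x\<bar> \<le> R} (R, 0) (-R, 0)"
  unfolding foci_of_def
proof (intro exI set_eqI iffI)
  fix P :: "real \<times> real" assume "P \<in> {(x, 0) | x. \<bar>x\<bar> \<le> R}"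
  then show "P \<in> {P. dist P (R, 0) + dist P (-R, 0) = 2 * R}" by (auto simp: dist_pair_sqrt)
next
  fix P :: "real \<times> real" assume "P \<in> {P. dist P (R, 0) + dist P (-R, 0) = 2 * R}"
  moreover obtain x y where P: "P = (x, y)" by fastforce
  ultimately have sum: "sqrt ((x - R)^2 + y^2) + sqrt ((x + R)^2 + y^2) = 2 * R"
    by (simp add: dist_pair_sqrt)
  have "y = 0"
  proof (rule ccontr)
    assume "y \<noteq> 0"
    then have "\<bar>x - R\<bar> < sqrt ((x - R)^2 + y^2)"
      by (metis real_sqrt_abs real_sqrt_less_mono less_add_same_cancel1 zero_less_power2)
    moreover have "\<bar>x + R\<bar> \<le> sqrt ((x + R)^2 + y^2)"
      by (metis real_sqrt_abs real_sqrt_le_mono le_add_same_cancel1 zero_le_power2)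
    ultimately show False using sum by linarith
  qed
  with sum have "\<bar>x\<bar> \<le> R" by simp
  with \<open>y = 0\<close> show "P \<in> {(x, 0) | x. \<bar>x\<bar> \<le> R}" using P by blast
qed

lemma foci_of_flat_segment_iff:
  assumes R: "R > 0"
  shows "(\<exists>G. foci_of {(x, 0) | x. \<bar>x\<bar> \<le> R} (f1, f2) G) \<longleftrightarrow> f2 = 0 \<and> \<bar>f1\<bar> = R"
proof
  assume "\<exists>G. foci_of {(x, 0) | x. \<bar>x\<bar> \<le> R} (f1, f2) G"
  then obtain a g1 g2 where "{(x, 0) | x. \<bar>x\<bar> \<le> R} = {P. dist P (f1, f2) + dist P (g1, g2) = a}"
    unfolding foci_of_def by auto
  then show "f2 = 0 \<and> \<bar>f1\<bar> = R" by (rule flat_segment_focal_set_imp_end[OF R])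
next
  assume "f2 = 0 \<and> \<bar>f1\<bar> = R"
  then consider "(f1, f2) = (R, 0)" | "(f1, f2) = (-R, 0)" by fastforce
  then show "\<exists>G. foci_of {(x, 0) | x. \<bar>x\<bar> \<le> R} (f1, f2) G"
    using foci_of_flat_segment[OF R] foci_of_commute[OF foci_of_flat_segment[OF R]] by cases auto
qed

lemma osc_orbit_implicit:
  assumes c: "c \<noteq> 0" and w: "w \<noteq> 0"
  shows "osc_orbit c u w = {(x, y). (w * x - u * y)^2 + c^2 * y^2 = c^2 * w^2}"
proof (intro set_eqI iffI)
  fix P assume "P \<in> osc_orbit c u w"
  then obtain t where P: "P = (c * cos t + u * sin t, w * sin t)" unfolding osc_orbit_def by blast
  have "(w * (c * cos t + u * sin t) - u * (w * sin t))^2 + c^2 * (w * sin t)^2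
      = c^2 * w^2 * ((sin t)^2 + (cos t)^2)" by algebra
  then show "P \<in> {(x, y). (w * x - u * y)^2 + c^2 * y^2 = c^2 * w^2}" using P by simp
next
  fix P assume "P \<in> {(x, y). (w * x - u * y)^2 + c^2 * y^2 = c^2 * w^2}"
  then obtain x y where P: "P = (x, y)" and E: "(w * x - u * y)^2 + c^2 * y^2 = c^2 * w^2" by blast
  define C S where "C = (w * x - u * y) / (c * w)" and "S = y / w"
  have "C^2 + S^2 = ((w * x - u * y)^2 + c^2 * y^2) / (c^2 * w^2)"
    unfolding C_def S_def using c w by (simp add: power_divide power_mult_distrib field_simps)
  also have "\<dots> = 1" using E c w by simp
  finally obtain t where t: "0 \<le> t" "t \<le> 2 * pi" "C = cos t" "S = sin t"
    using sincos_total_2pi_le by blast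
  have "x = c * C + u * S" "y = w * S" unfolding C_def S_def using c w by (simp_all add: field_simps)
  then show "P \<in> osc_orbit c u w" using osc_orbitI[OF t(1,2)] t(3,4) P by simp
qed

lemma focal_sum_of_conic:
  fixes s f1 f2 x y :: real
  assumes s: "s > 0" and K: "s - f1^2 - f2^2 > 0"
    and conic: "s * (x^2 + y^2) - (x * f1 + y * f2)^2 = s * (s - f1^2 - f2^2)"
  shows "sqrt ((x - f1)^2 + (y - f2)^2) + sqrt ((x + f1)^2 + (y + f2)^2) = 2 * sqrt s"
proof -
  define p where "p = x * f1 + y * f2"
  have P2: "s * (x^2 + y^2) = p^2 + s * (s - f1^2 - f2^2)" using conic unfolding p_def by simp
  have "(x^2 + y^2) * (f1^2 + f2^2) - p^2 = (x * f2 - y * f1)^2" unfolding p_def by algebra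
  then have "s * p^2 \<le> s * (x^2 + y^2) * (f1^2 + f2^2)"
    using s by (simp add: mult.assoc) (smt (verit) zero_le_power2)
  then have "s * p^2 \<le> (p^2 + s * (s - f1^2 - f2^2)) * (f1^2 + f2^2)" using P2 by simp
  then have "p^2 * (s - f1^2 - f2^2) \<le> s * (s - f1^2 - f2^2) * (f1^2 + f2^2)"
    by (simp add: algebra_simps)
  then have "p^2 \<le> s * (f1^2 + f2^2)" using K by (simp add: mult.commute mult.left_commute)
  also have "\<dots> < s^2" using K s by (simp add: power2_eq_square)
  finally have p: "\<bar>p\<bar> < s" using s by (metis abs_of_pos power2_abs power_less_imp_less_base less_imp_le)
  text \<open>On the conic the two focal distances are \<open>(s \<mp> p) / \<surd>s\<close>.\<close>
  have "s * ((x - f1)^2 + (y - f2)^2) = (s - p)^2" "s * ((x + f1)^2 + (y + f2)^2) = (s + p)^2"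
    using P2 unfolding p_def by algebra+
  then have "(x - f1)^2 + (y - f2)^2 = (s - p)^2 / s" "(x + f1)^2 + (y + f2)^2 = (s + p)^2 / s"
    using s by (simp_all add: field_simps)
  then have "sqrt ((x - f1)^2 + (y - f2)^2) + sqrt ((x + f1)^2 + (y + f2)^2)
      = (s - p) / sqrt s + (s + p) / sqrt s"
    using p s by (simp add: real_sqrt_divide)
  also have "\<dots> = 2 * sqrt s"
    using s by (simp add: add_divide_distrib[symmetric] real_div_sqrt flip: times_divide_eq_right)
  finally show ?thesis .
qed

lemma foci_of_osc_orbit_nondegenerate:
  assumes c: "c \<noteq> 0" and w: "w \<noteq> 0"
    and foc: "f1^2 - f2^2 = c^2 + u^2 - w^2" "f1 * f2 = u * w"
  shows "foci_of (osc_orbit c u w) (f1, f2) (-f1, -f2)"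
proof -
  define s where "s = f1^2 + w^2"
  have s: "s > 0" unfolding s_def using w by (simp add: add_nonneg_pos)
  have sK: "s * (s - f1^2 - f2^2) = c^2 * w^2"
    using foc[THEN diff_eq_0I] unfolding s_def by algebra
  have "s * (s - f1^2 - f2^2) > 0" using sK c w by simp
  then have K: "s - f1^2 - f2^2 > 0" using s by (simp add: zero_less_mult_iff)
  text \<open>The implicit equation of the orbit is the focal equation of the ellipse with foci \<open>\<plusminus>f\<close>
    and major axis \<open>2 \<surd>s\<close>.\<close>
  have conic_iff: "(w * x - u * y)^2 + c^2 * y^2 = c^2 * w^2 \<longleftrightarrow>
      s * (x^2 + y^2) - (x * f1 + y * f2)^2 = s * (s - f1^2 - f2^2)" for x y
  proof -
    have "s * (x^2 + y^2) - (x * f1 + y * f2)^2 - s * (s - f1^2 - f2^2)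
        = (w * x - u * y)^2 + c^2 * y^2 - c^2 * w^2"
      using foc[THEN diff_eq_0I] sK[THEN diff_eq_0I] unfolding s_def by algebra
    then show ?thesis by linarith
  qed
  have a2: "(2 * sqrt s)^2 = 4 * s" using s by (simp add: power_mult_distrib)
  have "(2 * sqrt s)^4 = ((2 * sqrt s)^2)^2" by (simp flip: power_mult)
  then have a4: "(2 * sqrt s)^4 = 16 * s^2" unfolding a2 by (simp add: power_mult_distrib)
  have "osc_orbit c u w = {P. dist P (f1, f2) + dist P (-f1, -f2) = 2 * sqrt s}"
  proof (intro set_eqI iffI)
    fix P assume "P \<in> osc_orbit c u w"
    then obtain x y where "P = (x, y)" "(w * x - u * y)^2 + c^2 * y^2 = c^2 * w^2"
      unfolding osc_orbit_implicit[OF c w] by blast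
    then show "P \<in> {P. dist P (f1, f2) + dist P (-f1, -f2) = 2 * sqrt s}"
      using focal_sum_of_conic[OF s K] conic_iff by (simp add: dist_pair_sqrt)
  next
    fix P assume "P \<in> {P. dist P (f1, f2) + dist P (-f1, -f2) = 2 * sqrt s}"
    moreover obtain x y where P: "P = (x, y)" by fastforce
    ultimately have "sqrt ((x - f1)^2 + (y - f2)^2) + sqrt ((x + f1)^2 + (y + f2)^2) = 2 * sqrt s"
      by (simp add: dist_pair_sqrt)
    from focal_sum_conic[OF this] s
    have "4 * s * ((x^2 + y^2) + (f1^2 + f2^2)) = 16 * s^2 / 4 + 4 * (x * f1 + y * f2)^2"
      unfolding a2 a4 by simp
    then have "s * (x^2 + y^2) - (x * f1 + y * f2)^2 = s * (s - f1^2 - f2^2)"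
      by (simp add: algebra_simps power2_eq_square)
    then show "P \<in> osc_orbit c u w" unfolding osc_orbit_implicit[OF c w] P conic_iff by simp
  qed
  then show ?thesis unfolding foci_of_def by blast
qed

lemma foci_of_osc_orbit_iff:
  assumes c: "c > 0"
  shows "(\<exists>G. foci_of (osc_orbit c u w) (f1, f2) G) \<longleftrightarrow>
    f1^2 - f2^2 = c^2 + u^2 - w^2 \<and> f1 * f2 = u * w"
proof (cases "w = 0")
  case True
  define R where "R = sqrt (c^2 + u^2)"
  have cu: "c^2 + u^2 > 0" using c by (simp add: add_pos_nonneg)
  then have R: "R > 0" and R2: "R^2 = c^2 + u^2" unfolding R_def by simp_all
  have flat: "osc_orbit c u w = {(x, 0) | x. \<bar>x\<bar> \<le> R}"
    unfolding R_def True using osc_orbit_flat[OF cu] .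
  have "f1^2 - f2^2 = c^2 + u^2 - w^2 \<and> f1 * f2 = u * w \<longleftrightarrow> f2 = 0 \<and> f1^2 = R^2"
  proof
    assume foc: "f1^2 - f2^2 = c^2 + u^2 - w^2 \<and> f1 * f2 = u * w"
    have "f2 = 0"
    proof (rule ccontr)
      assume "f2 \<noteq> 0"
      with foc True have "-(f2^2) = R^2" using R2 by auto
      then show False using R by (smt (verit) zero_le_power2 zero_less_power)
    qed
    with foc True R2 show "f2 = 0 \<and> f1^2 = R^2" by simp
  qed (use True R2 in simp)
  also have "\<dots> \<longleftrightarrow> f2 = 0 \<and> \<bar>f1\<bar> = R"
    using R by (metis abs_of_pos power2_abs power2_eq_iff_nonneg abs_ge_zero less_imp_le)
  finally have foc_iff:
    "f1^2 - f2^2 = c^2 + u^2 - w^2 \<and> f1 * f2 = u * w \<longleftrightarrow> f2 = 0 \<and> \<bar>f1\<bar> = R" .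
  show ?thesis unfolding flat foc_iff by (rule foci_of_flat_segment_iff[OF R])
next
  case False
  show ?thesis
  proof
    assume "\<exists>G. foci_of (osc_orbit c u w) (f1, f2) G"
    then obtain g1 g2 where "foci_of (osc_orbit c u w) (f1, f2) (g1, g2)" by auto
    then show "f1^2 - f2^2 = c^2 + u^2 - w^2 \<and> f1 * f2 = u * w"
      by (rule osc_orbit_foci_nondegenerate[OF c False])
  next
    assume "f1^2 - f2^2 = c^2 + u^2 - w^2 \<and> f1 * f2 = u * w"
    then have "foci_of (osc_orbit c u w) (f1, f2) (-f1, -f2)"
      using foci_of_osc_orbit_nondegenerate[OF _ False] c by simp
    then show "\<exists>G. foci_of (osc_orbit c u w) (f1, f2) G" ..
  qed
qed

section \<open>The Cassini oval and the ellipse of safety\<close>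

lemma focus_locus_double_angle:
  assumes "x0 > 0"
  shows "focus_locus x0 v0 = {(x, y). \<exists>\<alpha>. -pi \<le> \<alpha> \<and> \<alpha> \<le> pi \<and>
    x^2 - y^2 - x0^2 = v0^2 * cos (2 * \<alpha>) \<and> 2 * x * y = v0^2 * sin (2 * \<alpha>)}"
proof -
  have double_angle:
    "x^2 - y^2 = x0^2 + (v0 * cos \<alpha>)^2 - (v0 * sin \<alpha>)^2 \<and> x * y = v0 * cos \<alpha> * (v0 * sin \<alpha>) \<longleftrightarrow>
      x^2 - y^2 - x0^2 = v0^2 * cos (2 * \<alpha>) \<and> 2 * x * y = v0^2 * sin (2 * \<alpha>)" for x y \<alpha>
  proof -
    have double: "cos (2 * \<alpha>) = (cos \<alpha>)^2 - (sin \<alpha>)^2" "sin (2 * \<alpha>) = 2 * sin \<alpha> * cos \<alpha>"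
      by (simp_all add: cos_double sin_double)
    have "x^2 - y^2 = x0^2 + (v0 * cos \<alpha>)^2 - (v0 * sin \<alpha>)^2 \<longleftrightarrow>
        x^2 - y^2 - x0^2 = v0^2 * cos (2 * \<alpha>)"
      unfolding double by (auto simp: power_mult_distrib right_diff_distrib)
    moreover have "x * y = v0 * cos \<alpha> * (v0 * sin \<alpha>) \<longleftrightarrow> 2 * x * y = v0^2 * sin (2 * \<alpha>)"
      unfolding double by (simp add: power2_eq_square mult_ac)
    ultimately show ?thesis by blast
  qed
  show ?thesis
  proof (intro set_eqI)
    fix F :: "real \<times> real"
    obtain x y where F: "F = (x, y)" by fastforce
    show "F \<in> focus_locus x0 v0 \<longleftrightarrow> F \<in> {(x, y). \<exists>\<alpha>. -pi \<le> \<alpha> \<and> \<alpha> \<le> pi \<and>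
      x^2 - y^2 - x0^2 = v0^2 * cos (2 * \<alpha>) \<and> 2 * x * y = v0^2 * sin (2 * \<alpha>)}"
      unfolding F focus_locus_def E_curve_eq_osc_orbit mem_Collect_eq foci_of_osc_orbit_iff[OF assms]
        double_angle by simp
  qed
qed

lemma cassini_product: "((x + x0)^2 + y^2) * ((x - x0)^2 + y^2) = (x^2 - y^2 - x0^2)^2 + (2 * x * y)^2"
  for x y x0 :: real by algebra

lemma double_angle_iff_cassini:
  fixes x y x0 v0 :: real
  assumes v0: "v0 > 0"
  shows "(\<exists>\<alpha>. -pi \<le> \<alpha> \<and> \<alpha> \<le> pi \<and>
      x^2 - y^2 - x0^2 = v0^2 * cos (2 * \<alpha>) \<and> 2 * x * y = v0^2 * sin (2 * \<alpha>))
    \<longleftrightarrow> ((x + x0)^2 + y^2) * ((x - x0)^2 + y^2) = v0^4"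
proof
  assume "\<exists>\<alpha>. -pi \<le> \<alpha> \<and> \<alpha> \<le> pi \<and>
      x^2 - y^2 - x0^2 = v0^2 * cos (2 * \<alpha>) \<and> 2 * x * y = v0^2 * sin (2 * \<alpha>)"
  then obtain \<alpha> where \<alpha>: "x^2 - y^2 - x0^2 = v0^2 * cos (2 * \<alpha>)" "2 * x * y = v0^2 * sin (2 * \<alpha>)"
    by blast
  have "(sin (2 * \<alpha>))^2 + (cos (2 * \<alpha>))^2 = 1" by simp
  then have "(x^2 - y^2 - x0^2)^2 + (2 * x * y)^2 - v0^4 = 0"
    using \<alpha>[THEN diff_eq_0I] by algebra
  then show "((x + x0)^2 + y^2) * ((x - x0)^2 + y^2) = v0^4"
    unfolding cassini_product by simp
next
  assume "((x + x0)^2 + y^2) * ((x - x0)^2 + y^2) = v0^4"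
  then have "((x^2 - y^2 - x0^2) / v0^2)^2 + (2 * x * y / v0^2)^2 = 1"
    using v0 unfolding cassini_product
    by (simp add: power_divide add_divide_distrib[symmetric] flip: power_mult)
  then obtain t where t: "0 \<le> t" "t \<le> 2 * pi"
    "(x^2 - y^2 - x0^2) / v0^2 = cos t" "2 * x * y / v0^2 = sin t"
    using sincos_total_2pi_le by blast
  then have "-pi \<le> t / 2 \<and> t / 2 \<le> pi \<and>
      x^2 - y^2 - x0^2 = v0^2 * cos (2 * (t / 2)) \<and> 2 * x * y = v0^2 * sin (2 * (t / 2))"
    using v0 by (simp add: field_simps)
  then show "\<exists>\<alpha>. -pi \<le> \<alpha> \<and> \<alpha> \<le> pi \<and>
      x^2 - y^2 - x0^2 = v0^2 * cos (2 * \<alpha>) \<and> 2 * x * y = v0^2 * sin (2 * \<alpha>)" by blast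
qed

lemma focus_locus_cassini:
  assumes "x0 > 0" "v0 > 0"
  shows "focus_locus x0 v0 = {(x, y). ((x + x0)^2 + y^2) * ((x - x0)^2 + y^2) = v0^4}"
  unfolding focus_locus_double_angle[OF assms(1)] double_angle_iff_cassini[OF assms(2)] ..

lemma safety_ellipse_bound:
  fixes p q X V W :: real
  assumes X: "X > 0" and W: "0 \<le> W" "W \<le> V"
    and diff: "p - q = X + V - 2 * W" and prod: "p * q = W * (V - W)"
  shows "p * V + q * (X + V) \<le> V * (X + V)"
proof -
  define K D where "K = X + 2 * V" and "D = X + V - 2 * W"
  define Z Z0 where "Z = q * K" and "Z0 = 2 * V * W"
  text \<open>\<open>Z\<close> is a root of \<open>z (z + D K) = K\<^sup>2 W (V - W)\<close>, and \<open>Z0\<close> makes the left side at least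
    as large; as \<open>z \<mapsto> z (z + D K)\<close> increases where \<open>z + D K \<ge> 0\<close>, \<open>Z \<le> Z0\<close>.\<close>
  have root: "Z * (Z + D * K) = K^2 * (W * (V - W))"
    using diff[THEN diff_eq_0I] prod[THEN diff_eq_0I] unfolding Z_def D_def by algebra
  have "Z0 * (Z0 + D * K) - K^2 * (W * (V - W)) = W * (V * X * K + W * X^2)"
    unfolding Z0_def D_def K_def by algebra
  moreover have "W * (V * X * K + W * X^2) \<ge> 0" using X W unfolding K_def by simp
  ultimately have Z0_above: "K^2 * (W * (V - W)) \<le> Z0 * (Z0 + D * K)" by linarith
  have "Z0 + D * K = (X + V) * (X + 2 * V - 2 * W)" unfolding Z0_def D_def K_def by algebra
  then have Z0_pos: "0 \<le> Z0" "0 \<le> Z0 + D * K" using X W unfolding Z0_def by simp_all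
  have "Z \<le> Z0"
  proof (rule ccontr)
    assume "\<not> Z \<le> Z0"
    then have "Z0 * (Z0 + D * K) < Z * (Z + D * K)"
      using Z0_pos by (intro mult_strict_mono) auto
    then show False using root Z0_above by linarith
  qed
  have "p * V + q * (X + V) = D * V + Z" using diff unfolding Z_def D_def K_def by algebra
  also have "\<dots> \<le> D * V + Z0" using \<open>Z \<le> Z0\<close> by simp
  also have "\<dots> = V * (X + V)" unfolding D_def Z0_def by algebra
  finally show ?thesis .
qed

lemma focus_in_safety_ellipse:
  assumes x0: "x0 > 0" and v0: "v0 > 0" and F: "(x, y) \<in> focus_locus x0 v0"
  shows "x^2 / (x0^2 + v0^2) + y^2 / v0^2 \<le> 1"
proof -
  obtain \<alpha> where \<alpha>: "x^2 - y^2 - x0^2 = v0^2 * cos (2 * \<alpha>)" "2 * x * y = v0^2 * sin (2 * \<alpha>)"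
    using F unfolding focus_locus_double_angle[OF x0] by blast
  have sc: "(sin \<alpha>)^2 + (cos \<alpha>)^2 = 1" by simp
  have "cos (2 * \<alpha>) = 1 - 2 * (sin \<alpha>)^2" "sin (2 * \<alpha>) = 2 * sin \<alpha> * cos \<alpha>"
    by (simp_all add: cos_double_sin sin_double)
  then have "x^2 - y^2 = x0^2 + v0^2 - 2 * (v0 * sin \<alpha>)^2"
    and "x^2 * y^2 = (v0 * sin \<alpha>)^2 * (v0^2 - (v0 * sin \<alpha>)^2)"
    using \<alpha>[THEN diff_eq_0I] sc[THEN diff_eq_0I] by algebra+
  moreover have "(sin \<alpha>)^2 \<le> 1" using sc by (metis le_add_same_cancel1 zero_le_power2)
  ultimately have "x^2 * v0^2 + y^2 * (x0^2 + v0^2) \<le> v0^2 * (x0^2 + v0^2)"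
    using x0 v0 by (intro safety_ellipse_bound) (auto simp: power_mult_distrib mult_left_le)
  then show ?thesis using x0 v0 by (simp add: field_simps add_pos_nonneg)
qed

section \<open>Polar forms and the lemniscate\<close>

lemma polar_squares:
  fixes r t :: real
  shows "(r * cos t)^2 + (r * sin t)^2 = r^2"
    and "(r * cos t)^2 - (r * sin t)^2 = r^2 * cos (2 * t)"
proof -
  have "(sin t)^2 + (cos t)^2 = 1" by simp
  then show "(r * cos t)^2 + (r * sin t)^2 = r^2"
    by (simp add: power_mult_distrib flip: distrib_left)
  show "(r * cos t)^2 - (r * sin t)^2 = r^2 * cos (2 * t)"
    unfolding cos_double by (simp add: power_mult_distrib right_diff_distrib)
qed

lemma polar_nonneg_ex: "\<exists>r \<theta>. r \<ge> 0 \<and> x = r * cos \<theta> \<and> y = r * sin \<theta>" for x y :: real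
proof -
  obtain r \<theta> where xy: "x = r * cos \<theta>" "y = r * sin \<theta>" using polar_Ex by blast
  show ?thesis
  proof (cases "r \<ge> 0")
    case True
    with xy show ?thesis by blast
  next
    case False
    with xy have "-r \<ge> 0 \<and> x = -r * cos (\<theta> + pi) \<and> y = -r * sin (\<theta> + pi)" by simp
    then show ?thesis by blast
  qed
qed

lemma quartic_polar:
  "{(x, y). (x^2 + y^2)^2 - 2 * x0^2 * (x^2 - y^2) = v0^4 - x0^4}
   = {(r * cos \<theta>, r * sin \<theta>) | r \<theta>. r \<ge> 0 \<and> r^4 - 2 * x0^2 * r^2 * cos (2 * \<theta>) = v0^4 - x0^4}"
  for x0 v0 :: real
proof -
  have "(r^2)^2 = r^4" for r :: real by simp
  then have polar: "((r * cos \<theta>)^2 + (r * sin \<theta>)^2)^2 - 2 * x0^2 * ((r * cos \<theta>)^2 - (r * sin \<theta>)^2)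
      = r^4 - 2 * x0^2 * r^2 * cos (2 * \<theta>)" for r \<theta> :: real
    unfolding polar_squares by (simp add: mult.assoc)
  show ?thesis
  proof (intro set_eqI iffI)
    fix P assume "P \<in> {(x, y). (x^2 + y^2)^2 - 2 * x0^2 * (x^2 - y^2) = v0^4 - x0^4}"
    then obtain x y where P: "P = (x, y)"
      and quartic: "(x^2 + y^2)^2 - 2 * x0^2 * (x^2 - y^2) = v0^4 - x0^4"
      by blast
    obtain r \<theta> where r: "r \<ge> 0" and xy: "x = r * cos \<theta>" "y = r * sin \<theta>"
      using polar_nonneg_ex by blast
    have "r^4 - 2 * x0^2 * r^2 * cos (2 * \<theta>) = v0^4 - x0^4" using quartic unfolding xy polar .
    with P r xy show "P \<in> {(r * cos \<theta>, r * sin \<theta>) | r \<theta>.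
        r \<ge> 0 \<and> r^4 - 2 * x0^2 * r^2 * cos (2 * \<theta>) = v0^4 - x0^4}"
      by blast
  qed (auto simp: polar)
qed

lemma polar_ex_within_quarter:
  fixes x y :: real
  assumes "y^2 < x^2"
  shows "\<exists>r \<theta>. -(pi/4) \<le> \<theta> \<and> \<theta> \<le> pi/4 \<and> x = r * cos \<theta> \<and> y = r * sin \<theta>"
proof -
  have "x \<noteq> 0" using assms by auto
  define z where "z = y / x"
  have yz: "y = x * z" unfolding z_def using \<open>x \<noteq> 0\<close> by simp
  have "x^2 * (1 - z^2) > 0"
    using assms unfolding yz by (simp add: power_mult_distrib algebra_simps)
  then have "\<bar>z\<bar> < 1" using \<open>x \<noteq> 0\<close> by (simp add: zero_less_mult_iff abs_square_less_1)
  define \<theta> where "\<theta> = arctan z"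
  have "-(pi/4) \<le> \<theta>" "\<theta> \<le> pi/4" unfolding \<theta>_def using \<open>\<bar>z\<bar> < 1\<close>
    arctan_less_iff[of "-1" z] arctan_less_iff[of z 1] arctan_one arctan_minus[of 1] by auto
  moreover have "sqrt (1 + z^2) > 0" by (simp add: add_pos_nonneg)
  then have "x = x * sqrt (1 + z^2) * cos \<theta>" "y = x * sqrt (1 + z^2) * sin \<theta>"
    unfolding \<theta>_def yz by (simp_all add: cos_arctan sin_arctan)
  ultimately show ?thesis by blast
qed

lemma lemniscate_polar:
  fixes a :: real
  assumes a: "a > 0"
  shows "{(x, y). (x^2 + y^2)^2 = 2 * a^2 * (x^2 - y^2)} =
    {(r * cos \<theta>, r * sin \<theta>) | r \<theta>. -(pi/4) \<le> \<theta> \<and> \<theta> \<le> pi/4 \<and> r^2 = 2 * a^2 * cos (2 * \<theta>)}"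
    (is "?C = ?P")
proof (intro set_eqI iffI)
  fix P assume "P \<in> ?P"
  then obtain r \<theta> where P: "P = (r * cos \<theta>, r * sin \<theta>)" "r^2 = 2 * a^2 * cos (2 * \<theta>)"
    by blast
  then have "(r^2)^2 = 2 * a^2 * (r^2 * cos (2 * \<theta>))" by (simp add: power2_eq_square)
  then show "P \<in> ?C" using P polar_squares[of r \<theta>] by simp
next
  fix P assume "P \<in> ?C"
  then obtain x y where P: "P = (x, y)" and C: "(x^2 + y^2)^2 = 2 * a^2 * (x^2 - y^2)" by blast
  show "P \<in> ?P"
  proof (cases "x = 0")
    case True
    then have "(y^2)^2 + 2 * a^2 * y^2 = 0" using C by simp
    then have "y = 0" using a by (smt (verit) zero_le_power2 mult_pos_pos zero_less_power2)
    moreover have "-(pi/4) \<le> pi/4 \<and> (0::real)^2 = 2 * a^2 * cos (2 * (pi/4))" by simp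
    ultimately show ?thesis using P True by force
  next
    case False
    then have "(x^2 + y^2)^2 > 0" by (simp add: add_pos_nonneg)
    then have "y^2 < x^2" using C a by (simp add: zero_less_mult_iff)
    then obtain r \<theta> where \<theta>: "-(pi/4) \<le> \<theta>" "\<theta> \<le> pi/4"
      and xy: "x = r * cos \<theta>" "y = r * sin \<theta>"
      using polar_ex_within_quarter by blast
    have "r^2 * r^2 = 2 * a^2 * (r^2 * cos (2 * \<theta>))"
      using C unfolding xy polar_squares by (simp add: power2_eq_square)
    also have "\<dots> = r^2 * (2 * a^2 * cos (2 * \<theta>))" by (simp add: mult_ac)
    finally have "r^2 * r^2 = r^2 * (2 * a^2 * cos (2 * \<theta>))" .
    moreover have "r^2 \<noteq> 0" using False xy by auto
    ultimately have "r^2 = 2 * a^2 * cos (2 * \<theta>)" by (metis mult_left_cancel)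
    then show ?thesis using P xy \<theta> by blast
  qed
qed

lemma polar_half_angle:
  "{(r * cos \<theta>, r * sin \<theta>) | r \<theta>. -(pi/4) \<le> \<theta> \<and> \<theta> \<le> pi/4 \<and> r^2 = 2 * a^2 * cos (2 * \<theta>)}
   = {(r * cos (\<alpha>/2), r * sin (\<alpha>/2)) | r \<alpha>. -(pi/2) \<le> \<alpha> \<and> \<alpha> \<le> pi/2 \<and> r^2 = 2 * a^2 * cos \<alpha>}"
  (is "?\<Theta> = ?A") for a :: real
proof (intro set_eqI iffI)
  fix P assume "P \<in> ?\<Theta>"
  then obtain r \<theta> where
    "P = (r * cos \<theta>, r * sin \<theta>)" "-(pi/4) \<le> \<theta>" "\<theta> \<le> pi/4" "r^2 = 2 * a^2 * cos (2 * \<theta>)"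
    by blast
  then show "P \<in> ?A" by (intro CollectI exI[of _ r] exI[of _ "2 * \<theta>"]) simp
next
  fix P assume "P \<in> ?A"
  then obtain r \<alpha> where
    "P = (r * cos (\<alpha>/2), r * sin (\<alpha>/2))" "-(pi/2) \<le> \<alpha>" "\<alpha> \<le> pi/2" "r^2 = 2 * a^2 * cos \<alpha>"
    by blast
  then show "P \<in> ?\<Theta>" by (intro CollectI exI[of _ r] exI[of _ "\<alpha>/2"]) simp
qed

lemma lemniscate_focus:
  fixes a \<alpha> :: real
  assumes a: "a > 0" and \<alpha>: "-(pi/2) \<le> \<alpha>" "\<alpha> \<le> pi/2"
  shows "\<exists>F'. foci_of (E_curve a a \<alpha>)
    (sqrt (2 * a^2 * cos \<alpha>) * cos (\<alpha>/2), sqrt (2 * a^2 * cos \<alpha>) * sin (\<alpha>/2)) F'"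
proof -
  define \<rho> where "\<rho> = sqrt (2 * a^2 * cos \<alpha>)"
  have "cos \<alpha> \<ge> 0" using \<alpha> by (rule cos_ge_zero)
  then have \<rho>2: "\<rho>^2 = 2 * a^2 * cos \<alpha>" unfolding \<rho>_def by simp
  have half: "cos \<alpha> = (cos (\<alpha>/2))^2 - (sin (\<alpha>/2))^2" "sin \<alpha> = 2 * sin (\<alpha>/2) * cos (\<alpha>/2)"
    using cos_double[of "\<alpha>/2"] sin_double[of "\<alpha>/2"] by simp_all
  have sc: "(sin \<alpha>)^2 + (cos \<alpha>)^2 = 1" by simp
  have "(\<rho> * cos (\<alpha>/2))^2 - (\<rho> * sin (\<alpha>/2))^2 = a^2 + (a * cos \<alpha>)^2 - (a * sin \<alpha>)^2"
    using \<rho>2[THEN diff_eq_0I] half(1)[THEN diff_eq_0I] sc[THEN diff_eq_0I] by algebra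
  moreover have "(\<rho> * cos (\<alpha>/2)) * (\<rho> * sin (\<alpha>/2)) = (a * cos \<alpha>) * (a * sin \<alpha>)"
    using \<rho>2[THEN diff_eq_0I] half(2)[THEN diff_eq_0I] by algebra
  ultimately show ?thesis
    unfolding \<rho>_def[symmetric] E_curve_eq_osc_orbit foci_of_osc_orbit_iff[OF a] by blast
qed

lemma cassini_quartic:
  "((x + x0)^2 + y^2) * ((x - x0)^2 + y^2) = (x^2 + y^2)^2 - 2 * x0^2 * (x^2 - y^2) + x0^4"
  for x y x0 :: real by algebra

lemma focus_locus_lemniscate:
  assumes x0: "x0 > 0"
  shows "focus_locus x0 x0 = {(x, y). (x^2 + y^2)^2 = 2 * x0^2 * (x^2 - y^2)}
    \<and> focus_locus x0 x0 = {(r * cos \<theta>, r * sin \<theta>) | r \<theta>.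
         -(pi/4) \<le> \<theta> \<and> \<theta> \<le> pi/4 \<and> r^2 = 2 * x0^2 * cos (2 * \<theta>)}
    \<and> (\<forall>\<alpha>. -(pi/2) \<le> \<alpha> \<and> \<alpha> \<le> pi/2 \<longrightarrow>
         (\<exists>F'. foci_of (E_curve x0 x0 \<alpha>)
                 (sqrt (2 * x0^2 * cos \<alpha>) * cos (\<alpha>/2), sqrt (2 * x0^2 * cos \<alpha>) * sin (\<alpha>/2)) F'))
    \<and> focus_locus x0 x0 = {(r * cos (\<alpha>/2), r * sin (\<alpha>/2)) | r \<alpha>.
         -(pi/2) \<le> \<alpha> \<and> \<alpha> \<le> pi/2 \<and> r^2 = 2 * x0^2 * cos \<alpha>}"
proof -
  have lemniscate: "focus_locus x0 x0 = {(x, y). (x^2 + y^2)^2 = 2 * x0^2 * (x^2 - y^2)}"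
    unfolding focus_locus_cassini[OF x0 x0] cassini_quartic by (auto simp: power_mult_distrib)
  show ?thesis
    unfolding lemniscate lemniscate_polar[OF x0] polar_half_angle
    using lemniscate_focus[OF x0] by blast
qed

theorem mainTheorem1:
  fixes x0 v0 :: real
  assumes "x0 > 0" and "v0 > 0"
  shows
    "focus_locus x0 v0 = {(x, y). ((x + x0)^2 + y^2) * ((x - x0)^2 + y^2) = v0^4}
   \<and> focus_locus x0 v0 = {(x, y). (x^2 + y^2)^2 - 2 * x0^2 * (x^2 - y^2) = v0^4 - x0^4}
   \<and> focus_locus x0 v0 = {(r * cos \<theta>, r * sin \<theta>) | r \<theta>.
         r \<ge> 0 \<and> r^4 - 2 * x0^2 * r^2 * cos (2 * \<theta>) = v0^4 - x0^4}
   \<and> (\<forall>x y. (x, y) \<in> focus_locus x0 v0 \<longrightarrow>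
         (-x, y) \<in> focus_locus x0 v0 \<and> (x, -y) \<in> focus_locus x0 v0)
   \<and> (\<forall>x y. (x, y) \<in> focus_locus x0 v0 \<longrightarrow> x^2 / (x0^2 + v0^2) + y^2 / v0^2 \<le> 1)
   \<and> (x0 = v0 \<longrightarrow>
        focus_locus x0 v0 = {(x, y). (x^2 + y^2)^2 = 2 * x0^2 * (x^2 - y^2)}
      \<and> focus_locus x0 v0 = {(r * cos \<theta>, r * sin \<theta>) | r \<theta>.
           -(pi/4) \<le> \<theta> \<and> \<theta> \<le> pi/4 \<and> r^2 = 2 * x0^2 * cos (2 * \<theta>)}
      \<and> (\<forall>\<alpha>. -(pi/2) \<le> \<alpha> \<and> \<alpha> \<le> pi/2 \<longrightarrow>
           (\<exists>F'. foci_of (E_curve x0 v0 \<alpha>)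
                   (sqrt (2 * x0^2 * cos \<alpha>) * cos (\<alpha>/2), sqrt (2 * x0^2 * cos \<alpha>) * sin (\<alpha>/2)) F'))
      \<and> focus_locus x0 v0 = {(r * cos (\<alpha>/2), r * sin (\<alpha>/2)) | r \<alpha>.
           -(pi/2) \<le> \<alpha> \<and> \<alpha> \<le> pi/2 \<and> r^2 = 2 * x0^2 * cos \<alpha>})"
proof -
  have cassini: "focus_locus x0 v0 = {(x, y). ((x + x0)^2 + y^2) * ((x - x0)^2 + y^2) = v0^4}"
    by (rule focus_locus_cassini[OF assms])
  then have quartic:
    "focus_locus x0 v0 = {(x, y). (x^2 + y^2)^2 - 2 * x0^2 * (x^2 - y^2) = v0^4 - x0^4}"
    unfolding cassini_quartic by auto
  then have polar: "focus_locus x0 v0 = {(r * cos \<theta>, r * sin \<theta>) | r \<theta>.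
      r \<ge> 0 \<and> r^4 - 2 * x0^2 * r^2 * cos (2 * \<theta>) = v0^4 - x0^4}"
    unfolding quartic_polar .
  have "\<forall>x y. (x, y) \<in> focus_locus x0 v0 \<longrightarrow>
      (-x, y) \<in> focus_locus x0 v0 \<and> (x, -y) \<in> focus_locus x0 v0"
    unfolding quartic by simp
  with cassini quartic polar focus_in_safety_ellipse[OF assms] focus_locus_lemniscate[OF assms(1)]
  show ?thesis by blast
qed

end
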